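(* Let $d,k\ge1$ be integers, $c\in(0,\tfrac12)$, $\alpha>1$, $\varepsilon\ge0$, and let $\mathcal{A}$ be the set of all randomized algorithms whose outputs lie in $[c,1-c]^d$. Then \[ \mathrm{post}_{\mathcal{A},\alpha,k}(\varepsilon)\le R_\alpha\big(\mathrm{Bern}_k((c,\dots,c)),\mathrm{Bern}_k((1-c,\dots,1-c))\big)=dk\,r_\alpha(c). \]
   Context: For distributions $P,Q$ and $\alpha>1$, $R_\alpha(P,Q)=\frac{1}{\alpha-1}\log\int(dP/dQ)^\alpha dQ$ is the Rényi divergence of order $\alpha$, and $r_\alpha(p)=\frac{1}{\alpha-1}\log\left(p^\alpha(1-p)^{1-\alpha}+(1-p)^\alpha p^{1-\alpha}\right)$. Datasets are related by a symmetric neighboring relation $D\sim D'$; a randomized algorithm $A$ maps each dataset $D$ to a distribution $A(D)$; $\varepsilon_A(\alpha)=\sup_{D\sim D'}R_\alpha(A(D),A(D'))$. For $x\in[0,1]^d$, $\mathrm{Bern}(x)$ is the random vector in $\{0,1\}^d$ with independent coordinates, coordinate $i$ equal to $1$ with probability $x_i$; $\mathrm{Bern}_k(x)$ denotes $k$ independent runs of $\mathrm{Bern}(x)$. For a distribution $P$ on $[0,1]^d$, $\mathrm{Bern}_k(P)$ is the distribution of $\mathrm{Bern}_k(X)$ with $X\sim P$, and $\mathrm{Bern}_k(A)$ is the algorithm $D\mapsto\mathrm{Bern}_k(A(D))$. For a family $\mathcal{A}$ of algorithms with outputs in $[0,1]^d$, $\mathrm{post}_{\mathcal{A},\alpha,k}(\varepsilon)=\sup_{A\in\mathcal{A},\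 \varepsilon_A(\alpha)\le\varepsilon}\varepsilon_{\mathrm{Bern}_k(A)}(\alpha)$. *)

theory Defs
  imports "HOL-Probability.Probability"
begin

definition renyi :: "real \<Rightarrow> 'a measure \<Rightarrow> 'a measure \<Rightarrow> ereal" where
  "renyi \<alpha> P Q =
     (let I = (\<integral>\<^sup>+ x. ennreal (enn2real (RN_deriv Q P x) powr \<alpha>) \<partial>Q) in
      if absolutely_continuous Q P \<and> I < \<infinity>
      then ereal (ln (enn2real I) / (\<alpha> - 1)) else \<infinity>)"

definition r_fun :: "real \<Rightarrow> real \<Rightarrow> real" where
  "r_fun \<alpha> p = ln (p powr \<alpha> * (1 - p) powr (1 - \<alpha>) + (1 - p) powr \<alpha> * p powr (1 - \<alpha>)) / (\<alpha> - 1)"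

text \<open>Output space [0,1]^d is modelled inside the product measurable space on coordinates {..<d}.\<close>
definition out_space :: "nat \<Rightarrow> (nat \<Rightarrow> real) measure" where
  "out_space d = PiM {..<d} (\<lambda>_. borel)"

definition Bern :: "nat \<Rightarrow> (nat \<Rightarrow> real) \<Rightarrow> (nat \<Rightarrow> bool) pmf" where
  "Bern d x = Pi_pmf {..<d} False (\<lambda>i. bernoulli_pmf (x i))"

definition Bern_k :: "nat \<Rightarrow> nat \<Rightarrow> (nat \<Rightarrow> real) \<Rightarrow> (nat \<Rightarrow> nat \<Rightarrow> bool) pmf" where
  "Bern_k d k x = Pi_pmf {..<k} (\<lambda>_. False) (\<lambda>_. Bern d x)"

definition Bern_k_dist :: "nat \<Rightarrow> nat \<Rightarrow> (nat \<Rightarrow> real) measure \<Rightarrow> (nat \<Rightarrow> nat \<Rightarrow> bool) measure" where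
  "Bern_k_dist d k P = P \<bind> (\<lambda>x. measure_pmf (Bern_k d k x))"

definition Bern_k_alg :: "nat \<Rightarrow> nat \<Rightarrow> ('D \<Rightarrow> (nat \<Rightarrow> real) measure) \<Rightarrow> ('D \<Rightarrow> (nat \<Rightarrow> nat \<Rightarrow> bool) measure)" where
  "Bern_k_alg d k A = (\<lambda>D. Bern_k_dist d k (A D))"

definition eps_alg :: "('D \<Rightarrow> 'D \<Rightarrow> bool) \<Rightarrow> ('D \<Rightarrow> 'b measure) \<Rightarrow> real \<Rightarrow> ereal" where
  "eps_alg nb A \<alpha> = (SUP p \<in> {(D, D'). nb D D'}. renyi \<alpha> (A (fst p)) (A (snd p)))"

definition post :: "('D \<Rightarrow> (nat \<Rightarrow> real) measure) set \<Rightarrow> ('D \<Rightarrow> 'D \<Rightarrow> bool) \<Rightarrow> nat \<Rightarrow> real \<Rightarrow> nat \<Rightarrow> real \<Rightarrow> ereal" where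
  "post \<A> nb d \<alpha> k \<epsilon> =
     (SUP A \<in> {A \<in> \<A>. eps_alg nb A \<alpha> \<le> ereal \<epsilon>}. eps_alg nb (Bern_k_alg d k A) \<alpha>)"

definition algs_box :: "nat \<Rightarrow> real \<Rightarrow> ('D \<Rightarrow> (nat \<Rightarrow> real) measure) set" where
  "algs_box d c = {A. \<forall>D. A D \<in> space (prob_algebra (out_space d)) \<and>
                         (AE x in A D. \<forall>i<d. c \<le> x i \<and> x i \<le> 1 - c)}"

end

theory Submission
  imports Defs
begin

text \<open>
  For finitely supported \<open>u, v\<close> the Renyi divergence is \<open>ln M / (\<alpha> - 1)\<close> with the Renyi moment
  \<open>M = \<Sum>\<^sub>s u(s)^\<alpha> v(s)^(1-\<alpha>)\<close>. The moment is multiplicative over product distributions, so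
  for \<open>x, y\<close> in the cube \<open>[c,1-c]^d\<close> the moment of \<open>Bern_k(x)\<close> against \<open>Bern_k(y)\<close> is
  \<open>(\<Prod>\<^sub>i m(x_i, y_i))^k\<close>, where \<open>m(a,b) = a^\<alpha> b^(1-\<alpha>) + (1-a)^\<alpha> (1-b)^(1-\<alpha>)\<close>. Being convex in
  each argument, \<open>m\<close> attains its maximum over \<open>[c,1-c]^2\<close> at a corner: it is \<open>1\<close> on the
  diagonal and \<open>m(c,1-c) \<ge> 1\<close> off it. The outputs of \<open>Bern_k(A)\<close> are mixtures of such product
  laws, and Jensen's inequality for \<open>t^\<alpha>\<close> and \<open>t^(1-\<alpha>)\<close> shows that mixing cannot raise the moment
  above the pointwise bound \<open>m(c,1-c)^(dk)\<close>, which the two opposite corners attain.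
\<close>

definition renyi_moment :: "real \<Rightarrow> 'a set \<Rightarrow> ('a \<Rightarrow> real) \<Rightarrow> ('a \<Rightarrow> real) \<Rightarrow> real" where
  "renyi_moment \<alpha> S u v = (\<Sum>s\<in>S. u s powr \<alpha> * v s powr (1 - \<alpha>))"

lemma renyi_moment_pos:
  assumes "finite S" "S \<noteq> {}" "\<And>s. s \<in> S \<Longrightarrow> 0 < u s \<and> 0 < v s"
  shows "0 < renyi_moment \<alpha> S u v"
  unfolding renyi_moment_def using assms by (intro sum_pos mult_pos_pos) (force simp: powr_gt_zero)+

lemma renyi_count_space_density:
  fixes u v :: "'a \<Rightarrow> real"
  assumes S: "finite S" and \<alpha>: "\<alpha> > 1"
    and pos: "\<And>s. s \<in> S \<Longrightarrow> 0 < u s \<and> 0 < v s"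
    and zero: "\<And>s. s \<notin> S \<Longrightarrow> u s = 0 \<and> v s = 0"
  shows "renyi \<alpha> (density (count_space UNIV) (\<lambda>s. ennreal (u s)))
                 (density (count_space UNIV) (\<lambda>s. ennreal (v s)))
       = ereal (ln (renyi_moment \<alpha> S u v) / (\<alpha> - 1))"
proof -
  let ?C = "count_space UNIV :: 'a measure"
  define P where "P = density ?C (\<lambda>s. ennreal (u s))"
  define Q where "Q = density ?C (\<lambda>s. ennreal (v s))"
  define h where "h s = ennreal (u s / v s)" for s
  have v_nonneg: "0 \<le> v s" and quotient_nonneg: "0 \<le> u s / v s" and u_eq: "v s * (u s / v s) = u s" for s
    using pos[of s] zero[of s] by (cases "s \<in> S"; simp)+
  have "emeasure Q (space Q) = (\<Sum>s\<in>S. ennreal (v s))"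
    unfolding Q_def using S zero by (simp add: emeasure_density nn_integral_count_space')
  then interpret Q: finite_measure Q
    using S by (intro finite_measureI) simp
  have "density Q h = density ?C (\<lambda>s. ennreal (v s) * h s)"
    unfolding Q_def by (rule density_density_eq) auto
  also have "\<dots> = P"
    unfolding P_def h_def using v_nonneg u_eq by (simp add: ennreal_mult'[symmetric])
  finally have dens: "density Q h = P" .
  have "AE s in Q. h s = RN_deriv Q P s"
    by (rule Q.RN_deriv_unique[OF _ dens]) (simp add: Q_def)
  then have "AE s in Q. enn2real (RN_deriv Q P s) = u s / v s"
    by eventually_elim (metis h_def enn2real_ennreal quotient_nonneg)
  then have "(\<integral>\<^sup>+ s. ennreal (enn2real (RN_deriv Q P s) powr \<alpha>) \<partial>Q)
      = (\<integral>\<^sup>+ s. ennreal ((u s / v s) powr \<alpha>) \<partial>Q)"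
    by (intro nn_integral_cong_AE) (auto elim!: AE_mp)
  also have "\<dots> = (\<integral>\<^sup>+ s. ennreal (v s) * ennreal ((u s / v s) powr \<alpha>) \<partial>?C)"
    unfolding Q_def by (simp add: nn_integral_density)
  also have "\<dots> = (\<Sum>s\<in>S. ennreal (v s * (u s / v s) powr \<alpha>))"
    using S zero pos by (subst nn_integral_count_space') (auto simp: ennreal_mult less_imp_le)
  also have "\<dots> = ennreal (renyi_moment \<alpha> S u v)"
    unfolding renyi_moment_def using pos
    by (subst sum_ennreal) (auto intro!: sum.cong arg_cong[where f = ennreal] simp: powr_divide powr_diff less_imp_le)
  finally have "(\<integral>\<^sup>+ s. ennreal (enn2real (RN_deriv Q P s) powr \<alpha>) \<partial>Q) = ennreal (renyi_moment \<alpha> S u v)" .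
  moreover have "absolutely_continuous Q P"
    unfolding dens[symmetric] by (rule absolutely_continuousI_density) (simp add: Q_def h_def)
  moreover have "0 \<le> renyi_moment \<alpha> S u v"
    unfolding renyi_moment_def by (intro sum_nonneg) simp
  ultimately show ?thesis
    unfolding P_def Q_def renyi_def Let_def by simp
qed

lemma sum_PiE_dflt_prod:
  fixes f :: "'a \<Rightarrow> 'b \<Rightarrow> 'c :: comm_semiring_1"
  assumes "finite A" "\<And>i. i \<in> A \<Longrightarrow> finite (B i)"
  shows "(\<Sum>g\<in>PiE_dflt A dflt B. \<Prod>i\<in>A. f i (g i)) = (\<Prod>i\<in>A. \<Sum>y\<in>B i. f i y)"
proof -
  let ?extend = "\<lambda>g i. if i \<in> A then g i else dflt"
  have "inj_on ?extend (PiE A B)"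
    by (auto simp: inj_on_def fun_eq_iff PiE_def extensional_def) metis
  then have "(\<Sum>g\<in>PiE_dflt A dflt B. \<Prod>i\<in>A. f i (g i)) = (\<Sum>g\<in>PiE A B. \<Prod>i\<in>A. f i (?extend g i))"
    by (simp add: dflt_image_PiE[symmetric] sum.reindex)
  also have "\<dots> = (\<Sum>g\<in>PiE A B. \<Prod>i\<in>A. f i (g i))"
    by (intro sum.cong prod.cong) auto
  also have "\<dots> = (\<Prod>i\<in>A. \<Sum>y\<in>B i. f i y)"
    using assms by (simp add: prod_sum_PiE)
  finally show ?thesis .
qed

lemma renyi_moment_Pi_pmf:
  assumes "finite A" "\<And>i. i \<in> A \<Longrightarrow> finite (B i)"
  shows "renyi_moment \<alpha> (PiE_dflt A dflt B) (pmf (Pi_pmf A dflt p)) (pmf (Pi_pmf A dflt q))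
       = (\<Prod>i\<in>A. renyi_moment \<alpha> (B i) (pmf (p i)) (pmf (q i)))"
proof -
  have "renyi_moment \<alpha> (PiE_dflt A dflt B) (pmf (Pi_pmf A dflt p)) (pmf (Pi_pmf A dflt q))
      = (\<Sum>g\<in>PiE_dflt A dflt B. \<Prod>i\<in>A. pmf (p i) (g i) powr \<alpha> * pmf (q i) (g i) powr (1 - \<alpha>))"
    unfolding renyi_moment_def using assms(1)
    by (intro sum.cong) (auto simp: pmf_Pi' PiE_dflt_def prod_powr_distrib prod.distrib)
  also have "\<dots> = (\<Prod>i\<in>A. renyi_moment \<alpha> (B i) (pmf (p i)) (pmf (q i)))"
    unfolding renyi_moment_def by (rule sum_PiE_dflt_prod[OF assms])
  finally show ?thesis .
qed

lemma pmf_Pi_pmf_ge: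
  assumes "finite A" "g \<in> PiE_dflt A dflt B" "0 \<le> b"
    and "\<And>i y. i \<in> A \<Longrightarrow> y \<in> B i \<Longrightarrow> b \<le> pmf (p i) y"
  shows "b ^ card A \<le> pmf (Pi_pmf A dflt p) g"
proof -
  have "(\<Prod>i\<in>A. b) \<le> (\<Prod>i\<in>A. pmf (p i) (g i))"
    using assms(2-) by (intro prod_mono) (auto simp: PiE_dflt_def)
  then show ?thesis
    using assms(1,2) by (simp add: pmf_Pi' PiE_dflt_def)
qed

lemma emeasure_pmf_finite_support:
  assumes "finite S" "set_pmf p \<subseteq> S"
  shows "emeasure (measure_pmf p) A = (\<Sum>s\<in>A \<inter> S. ennreal (pmf p s))"
proof -
  have "emeasure (measure_pmf p) A = emeasure (measure_pmf p) (A \<inter> S)"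
    using assms(2) by (intro emeasure_eq_AE) (auto simp: AE_measure_pmf_iff)
  then show ?thesis
    using assms(1) by (simp add: emeasure_measure_pmf_finite)
qed

lemma bind_pmf_kernel_finite_support:
  fixes K :: "'a \<Rightarrow> 's pmf"
  assumes "prob_space P" and S: "finite S" and support: "\<And>x. set_pmf (K x) \<subseteq> S"
    and pmf_measurable[measurable]: "\<And>s. (\<lambda>x. pmf (K x) s) \<in> borel_measurable P"
  shows "P \<bind> (\<lambda>x. measure_pmf (K x)) = density (count_space UNIV) (\<lambda>s. ennreal (\<integral>x. pmf (K x) s \<partial>P))"
proof -
  interpret P: prob_space P by fact
  have integrable: "integrable P (\<lambda>x. pmf (K x) s)" for s
    by (rule P.integrable_const_bound[where B = 1]) (auto simp: pmf_le_1)
  have outside: "(\<integral>x. pmf (K x) s \<partial>P) = 0" if "s \<notin> S" for s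
    using support that by (subst pmf_eq_0_set_pmf[THEN iffD2]) auto
  have "(\<lambda>x. measure_pmf (K x)) \<in> measurable P (subprob_algebra (count_space UNIV))"
  proof (rule measurable_subprob_algebra)
    fix A :: "'s set"
    show "(\<lambda>x. emeasure (measure_pmf (K x)) A) \<in> borel_measurable P"
      unfolding emeasure_pmf_finite_support[OF S support] by measurable
  qed (simp_all add: measure_pmf.subprob_space_axioms)
  then have "emeasure (P \<bind> (\<lambda>x. measure_pmf (K x))) A = (\<integral>\<^sup>+x. emeasure (measure_pmf (K x)) A \<partial>P)" for A
    by (intro emeasure_bind P.not_empty) auto
  also have "\<dots> A = (\<Sum>s\<in>A \<inter> S. \<integral>\<^sup>+x. ennreal (pmf (K x) s) \<partial>P)" for A
    unfolding emeasure_pmf_finite_support[OF S support] by (intro nn_integral_sum) measurable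
  also have "\<dots> A = (\<Sum>s\<in>A \<inter> S. ennreal (\<integral>x. pmf (K x) s \<partial>P))" for A
    by (intro sum.cong refl nn_integral_eq_integral integrable) auto
  also have "\<dots> A = (\<integral>\<^sup>+s. ennreal (\<integral>x. pmf (K x) s \<partial>P) * indicator A s \<partial>count_space UNIV)" for A
    using S outside by (subst nn_integral_count_space'[where A = "A \<inter> S"]) (auto intro: sum.cong)
  also have "\<dots> A = emeasure (density (count_space UNIV) (\<lambda>s. ennreal (\<integral>x. pmf (K x) s \<partial>P))) A" for A
    by (simp add: emeasure_density)
  finally show ?thesis
    by (intro measure_eqI) (simp_all add: sets_bind[where N = "count_space UNIV"] P.not_empty)
qed

lemma convex_on_powr_nonpos:
  assumes "p \<le> 0"
  shows "convex_on {0<..} (\<lambda>x::real. x powr p)"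
proof (rule f''_ge0_imp_convex[where f' = "\<lambda>x. p * x powr (p - 1)" and f'' = "\<lambda>x. p * (p - 1) * x powr (p - 2)"])
  fix x :: real assume x: "x \<in> {0<..}"
  show "((\<lambda>x. x powr p) has_real_derivative p * x powr (p - 1)) (at x)"
    using x by (intro has_real_derivative_powr) auto
  show "((\<lambda>x. p * x powr (p - 1)) has_real_derivative p * (p - 1) * x powr (p - 2)) (at x)"
    using x by (auto intro!: derivative_eq_intros simp: algebra_simps)
  show "0 \<le> p * (p - 1) * x powr (p - 2)"
    using assms by (intro mult_nonneg_nonneg mult_nonpos_nonpos) auto
qed (rule convex_real_interval)

lemma (in finite_measure) integrable_powr_bounded:
  fixes g :: "'a \<Rightarrow> real"
  assumes "g \<in> borel_measurable M" "AE x in M. b \<le> g x \<and> g x \<le> B" "0 < b"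
  shows "integrable M (\<lambda>x. g x powr p)"
proof (rule integrable_const_bound[where B = "b powr p + B powr p"])
  show "AE x in M. norm (g x powr p) \<le> b powr p + B powr p"
    using assms(2)
  proof eventually_elim
    case (elim x)
    with \<open>0 < b\<close> have "g x powr p \<le> B powr p \<or> g x powr p \<le> b powr p"
      by (cases "0 \<le> p") (auto intro: powr_mono2 powr_mono2')
    then show ?case
      by (auto intro: add_increasing add_increasing2)
  qed
qed (use assms(1) in simp)

text \<open>Jensen's inequality for the convex maps \<open>t \<mapsto> t powr \<alpha>\<close> and \<open>t \<mapsto> t powr (1 - \<alpha>)\<close>
  bounds the moment of the two mixtures by the \<open>P \<otimes> Q\<close>-average of the pointwise moments.\<close>

lemma renyi_moment_mixture_le:
  fixes f :: "'a \<Rightarrow> 's \<Rightarrow> real"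
  assumes "prob_space P" "prob_space Q" "finite S" "\<alpha> > 1" "0 < b"
    and measurable_P: "\<And>s. (\<lambda>x. f x s) \<in> borel_measurable P"
    and measurable_Q: "\<And>s. (\<lambda>y. f y s) \<in> borel_measurable Q"
    and "AE x in P. x \<in> X" "AE y in Q. y \<in> X"
    and bounds: "\<And>x s. x \<in> X \<Longrightarrow> s \<in> S \<Longrightarrow> b \<le> f x s \<and> f x s \<le> B"
    and pointwise: "\<And>x y. x \<in> X \<Longrightarrow> y \<in> X \<Longrightarrow> renyi_moment \<alpha> S (f x) (f y) \<le> M"
  shows "renyi_moment \<alpha> S (\<lambda>s. \<integral>x. f x s \<partial>P) (\<lambda>s. \<integral>y. f y s \<partial>Q) \<le> M"
proof -
  interpret P: prob_space P by fact
  interpret Q: prob_space Q by fact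
  have bounds_P: "AE x in P. b \<le> f x s \<and> f x s \<le> B" and bounds_Q: "AE y in Q. b \<le> f y s \<and> f y s \<le> B"
    if "s \<in> S" for s
    using \<open>AE x in P. x \<in> X\<close> \<open>AE y in Q. y \<in> X\<close> bounds that by (auto elim!: AE_mp)
  have integrable_powr_P: "integrable P (\<lambda>x. f x s powr p)" and integrable_powr_Q: "integrable Q (\<lambda>y. f y s powr p)"
    if "s \<in> S" for s p
    using bounds_P[OF that] bounds_Q[OF that] \<open>0 < b\<close> measurable_P measurable_Q
    by (auto intro: P.integrable_powr_bounded Q.integrable_powr_bounded)
  have integrable_P: "integrable P (\<lambda>x. f x s)" and integrable_Q: "integrable Q (\<lambda>y. f y s)" if "s \<in> S" for s
    using bounds_P[OF that] bounds_Q[OF that] \<open>0 < b\<close>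
    by (auto intro!: P.integrable_const_bound[where B = B] Q.integrable_const_bound[where B = B]
             simp: measurable_P measurable_Q elim!: AE_mp)
  define E where "E s = (\<integral>y. f y s powr (1 - \<alpha>) \<partial>Q)" for s
  have jensen_P: "(\<integral>x. f x s \<partial>P) powr \<alpha> \<le> (\<integral>x. f x s powr \<alpha> \<partial>P)" if "s \<in> S" for s
    using bounds_P[OF that] \<open>0 < b\<close> \<open>\<alpha> > 1\<close>
    by (intro P.jensens_inequality[where I = "{0<..}"] integrable_powr_P that powr_convex integrable_P)
       (auto elim!: AE_mp)
  have jensen_Q: "(\<integral>y. f y s \<partial>Q) powr (1 - \<alpha>) \<le> E s" if "s \<in> S" for s
    unfolding E_def using bounds_Q[OF that] \<open>0 < b\<close> \<open>\<alpha> > 1\<close>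
    by (intro Q.jensens_inequality[where I = "{0<..}"] integrable_powr_Q that convex_on_powr_nonpos integrable_Q)
       (auto elim!: AE_mp)
  have "renyi_moment \<alpha> S (\<lambda>s. \<integral>x. f x s \<partial>P) (\<lambda>s. \<integral>y. f y s \<partial>Q) \<le> (\<Sum>s\<in>S. (\<integral>x. f x s powr \<alpha> \<partial>P) * E s)"
    unfolding renyi_moment_def by (intro sum_mono mult_mono jensen_P jensen_Q) (auto simp: E_def)
  also have "\<dots> = (\<integral>x. (\<Sum>s\<in>S. f x s powr \<alpha> * E s) \<partial>P)"
    using integrable_powr_P by (simp add: Bochner_Integration.integral_sum)
  also have "\<dots> \<le> M"
  proof (rule P.integral_le_const)
    show "integrable P (\<lambda>x. \<Sum>s\<in>S. f x s powr \<alpha> * E s)"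
      using integrable_powr_P by auto
    have "(\<Sum>s\<in>S. f x s powr \<alpha> * E s) = (\<integral>y. renyi_moment \<alpha> S (f x) (f y) \<partial>Q)" for x
      unfolding E_def renyi_moment_def using integrable_powr_Q by (simp add: Bochner_Integration.integral_sum)
    moreover have "(\<integral>y. renyi_moment \<alpha> S (f x) (f y) \<partial>Q) \<le> M" if "x \<in> X" for x
      using \<open>AE y in Q. y \<in> X\<close> integrable_powr_Q pointwise[OF that]
      by (intro Q.integral_le_const) (auto simp: renyi_moment_def elim!: AE_mp)
    ultimately show "AE x in P. (\<Sum>s\<in>S. f x s powr \<alpha> * E s) \<le> M"
      using \<open>AE x in P. x \<in> X\<close> by (auto elim!: AE_mp)
  qed
  finally show ?thesis .
qed

definition bernoulli_moment :: "real \<Rightarrow> real \<Rightarrow> real \<Rightarrow> real" where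
  "bernoulli_moment \<alpha> a b = a powr \<alpha> * b powr (1 - \<alpha>) + (1 - a) powr \<alpha> * (1 - b) powr (1 - \<alpha>)"

lemma renyi_moment_bernoulli_pmf:
  assumes "0 \<le> a" "a \<le> 1" "0 \<le> b" "b \<le> 1"
  shows "renyi_moment \<alpha> UNIV (pmf (bernoulli_pmf a)) (pmf (bernoulli_pmf b)) = bernoulli_moment \<alpha> a b"
  using assms by (simp add: renyi_moment_def bernoulli_moment_def UNIV_bool add.commute)

lemma convex_on_reflect:
  assumes "convex_on {0<..} f"
  shows "convex_on {..<1} (\<lambda>x::real. f (1 - x))"
proof (rule convex_onI)
  fix x y t :: real assume "0 < t" "t < 1" "x \<in> {..<1}" "y \<in> {..<1}"
  moreover have "1 - ((1 - t) *\<^sub>R x + t *\<^sub>R y) = (1 - t) *\<^sub>R (1 - x) + t *\<^sub>R (1 - y)"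
    by (simp add: algebra_simps)
  ultimately show "f (1 - ((1 - t) *\<^sub>R x + t *\<^sub>R y)) \<le> (1 - t) * f (1 - x) + t * f (1 - y)"
    using convex_onD[OF assms, of t "1 - x" "1 - y"] by auto
qed (rule convex_real_interval)

lemma convex_on_weighted_powr_sum:
  assumes "0 \<le> \<beta>" "0 \<le> \<gamma>" "p \<ge> 1 \<or> p \<le> 0"
  shows "convex_on {0<..<1} (\<lambda>x. \<beta> * x powr p + \<gamma> * (1 - x) powr p)"
proof -
  have "convex_on {0<..} (\<lambda>x::real. x powr p)"
    using assms(3) powr_convex convex_on_powr_nonpos by blast
  then have "convex_on {0<..<1} (\<lambda>x. x powr p)" "convex_on {0<..<1} (\<lambda>x. (1 - x) powr p)"
    by (auto elim: convex_on_subset intro: convex_on_subset[OF convex_on_reflect])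
  then show ?thesis
    using assms by (intro convex_on_add convex_on_cmul) auto
qed

lemma one_le_bernoulli_moment:
  assumes "0 < c" "c < 1" "\<alpha> > 1"
  shows "1 \<le> bernoulli_moment \<alpha> c (1 - c)"
proof -
  have "((1 - c) *\<^sub>R (c / (1 - c)) + c *\<^sub>R ((1 - c) / c)) powr \<alpha>
        \<le> (1 - c) * (c / (1 - c)) powr \<alpha> + c * ((1 - c) / c) powr \<alpha>"
    using assms by (intro convex_onD[OF powr_convex]) auto
  moreover have "(1 - c) *\<^sub>R (c / (1 - c)) + c *\<^sub>R ((1 - c) / c) = 1"
    using assms by simp
  ultimately show ?thesis
    using assms by (simp add: bernoulli_moment_def powr_divide powr_diff mult.commute)
qed

lemma bernoulli_moment_le:
  assumes c: "0 < c" "c < 1/2" and \<alpha>: "\<alpha> > 1"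
    and a: "a \<in> {c..1 - c}" and b: "b \<in> {c..1 - c}"
  shows "bernoulli_moment \<alpha> a b \<le> bernoulli_moment \<alpha> c (1 - c)"
proof -
  have sub: "{c..1 - c} \<subseteq> {0<..<1}" using c by auto
  have convex_left: "convex_on {c..1 - c} (\<lambda>a. bernoulli_moment \<alpha> a b')" for b'
    unfolding bernoulli_moment_def
    by (rule convex_on_subset[OF _ sub], subst (1 2) mult.commute) (use \<alpha> in \<open>auto intro: convex_on_weighted_powr_sum\<close>)
  have convex_right: "convex_on {c..1 - c} (\<lambda>b. bernoulli_moment \<alpha> a' b)" for a'
    unfolding bernoulli_moment_def
    by (rule convex_on_subset[OF _ sub]) (use \<alpha> in \<open>auto intro: convex_on_weighted_powr_sum\<close>)
  have "bernoulli_moment \<alpha> a b \<le> max (bernoulli_moment \<alpha> c b) (bernoulli_moment \<alpha> (1 - c) b)"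
    by (rule convex_on_le_max[OF convex_left a])
  also have "\<dots> \<le> max (max (bernoulli_moment \<alpha> c c) (bernoulli_moment \<alpha> c (1 - c)))
                       (max (bernoulli_moment \<alpha> (1 - c) c) (bernoulli_moment \<alpha> (1 - c) (1 - c)))"
    by (intro max.mono convex_on_le_max[OF convex_right b])
  also have "\<dots> = bernoulli_moment \<alpha> c (1 - c)"
    using one_le_bernoulli_moment[of c \<alpha>] c \<alpha>
    by (simp add: bernoulli_moment_def powr_add[symmetric] add.commute)
  finally show ?thesis .
qed

definition Bern_k_outcomes :: "nat \<Rightarrow> nat \<Rightarrow> (nat \<Rightarrow> nat \<Rightarrow> bool) set" where
  "Bern_k_outcomes d k = PiE_dflt {..<k} (\<lambda>_. False) (\<lambda>_. PiE_dflt {..<d} False (\<lambda>_. UNIV))"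

definition cube :: "nat \<Rightarrow> real \<Rightarrow> (nat \<Rightarrow> real) set" where
  "cube d c = {x. \<forall>i<d. c \<le> x i \<and> x i \<le> 1 - c}"

lemma finite_Bern_k_outcomes: "finite (Bern_k_outcomes d k)"
  unfolding Bern_k_outcomes_def by (intro finite_PiE_dflt) auto

lemma Bern_k_outcomes_nonempty: "Bern_k_outcomes d k \<noteq> {}"
  by (simp add: Bern_k_outcomes_def)

lemma set_pmf_Bern_k: "set_pmf (Bern_k d k x) \<subseteq> Bern_k_outcomes d k"
  unfolding Bern_k_def Bern_k_outcomes_def
  by (auto simp: set_Pi_pmf Bern_def PiE_dflt_def)

lemma pmf_Bern_k_ge:
  assumes "x \<in> cube d c" "0 \<le> c" "s \<in> Bern_k_outcomes d k"
  shows "c ^ (d * k) \<le> pmf (Bern_k d k x) s"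
proof -
  have "c \<le> pmf (bernoulli_pmf (x i)) b" if "i < d" for i b
    using assms(1,2) that by (cases b) (auto simp: cube_def)
  then have "c ^ d \<le> pmf (Bern d x) t" if "t \<in> PiE_dflt {..<d} False (\<lambda>_. UNIV)" for t
    using pmf_Pi_pmf_ge[OF _ that assms(2)] unfolding Bern_def by simp
  then have "(c ^ d) ^ k \<le> pmf (Bern_k d k x) s"
    using pmf_Pi_pmf_ge[OF _ assms(3)[unfolded Bern_k_outcomes_def]] assms(2) unfolding Bern_k_def by simp
  then show ?thesis
    by (simp add: power_mult)
qed

lemma renyi_moment_Bern_k:
  assumes "x \<in> cube d 0" "y \<in> cube d 0"
  shows "renyi_moment \<alpha> (Bern_k_outcomes d k) (pmf (Bern_k d k x)) (pmf (Bern_k d k y))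
       = (\<Prod>i<d. bernoulli_moment \<alpha> (x i) (y i)) ^ k"
proof -
  have "renyi_moment \<alpha> (Bern_k_outcomes d k) (pmf (Bern_k d k x)) (pmf (Bern_k d k y))
      = (\<Prod>j<k. renyi_moment \<alpha> (PiE_dflt {..<d} False (\<lambda>_. UNIV)) (pmf (Bern d x)) (pmf (Bern d y)))"
    unfolding Bern_k_outcomes_def Bern_k_def by (rule renyi_moment_Pi_pmf) auto
  also have "\<dots> = (\<Prod>j<k. \<Prod>i<d. renyi_moment \<alpha> UNIV (pmf (bernoulli_pmf (x i))) (pmf (bernoulli_pmf (y i))))"
    unfolding Bern_def by (subst renyi_moment_Pi_pmf) auto
  also have "\<dots> = (\<Prod>i<d. bernoulli_moment \<alpha> (x i) (y i)) ^ k"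
    using assms by (simp add: renyi_moment_bernoulli_pmf cube_def)
  finally show ?thesis .
qed

context
begin

interpretation pmf_as_function .

text \<open>\<open>bernoulli_pmf\<close> clamps its parameter to \<open>[0,1]\<close>; the closed form gives measurability in
  an unconstrained parameter.\<close>

lemma pmf_bernoulli_pmf_clamp: "pmf (bernoulli_pmf p) b = (if b then min 1 (max 0 p) else 1 - min 1 (max 0 p))"
  by transfer auto

end

lemma borel_measurable_pmf_Bern_k:
  assumes "sets M = sets (out_space d)"
  shows "(\<lambda>x. pmf (Bern_k d k x) s) \<in> borel_measurable M"
  unfolding measurable_cong_sets[OF assms refl] Bern_k_def Bern_def out_space_def
  by (simp add: pmf_Pi pmf_bernoulli_pmf_clamp cong: if_cong) measurable

lemma renyi_moment_Bern_k_le: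
  assumes c: "0 < c" "c < 1/2" and \<alpha>: "\<alpha> > 1" and "x \<in> cube d c" "y \<in> cube d c"
  shows "renyi_moment \<alpha> (Bern_k_outcomes d k) (pmf (Bern_k d k x)) (pmf (Bern_k d k y))
       \<le> bernoulli_moment \<alpha> c (1 - c) ^ (d * k)"
proof -
  have "x \<in> cube d 0" "y \<in> cube d 0"
    using assms by (auto simp: cube_def)
  then have "renyi_moment \<alpha> (Bern_k_outcomes d k) (pmf (Bern_k d k x)) (pmf (Bern_k d k y))
      = (\<Prod>i<d. bernoulli_moment \<alpha> (x i) (y i)) ^ k"
    by (rule renyi_moment_Bern_k)
  also have "\<dots> \<le> (\<Prod>i<d. bernoulli_moment \<alpha> c (1 - c)) ^ k"
    using assms by (intro power_mono prod_mono conjI bernoulli_moment_le prod_nonneg)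
                   (auto simp: cube_def bernoulli_moment_def)
  finally show ?thesis
    by (simp add: power_mult)
qed

lemma Bern_k_dist_eq_density:
  assumes "P \<in> space (prob_algebra (out_space d))"
  shows "Bern_k_dist d k P = density (count_space UNIV) (\<lambda>s. ennreal (\<integral>x. pmf (Bern_k d k x) s \<partial>P))"
  unfolding Bern_k_dist_def
proof (rule bind_pmf_kernel_finite_support[OF _ finite_Bern_k_outcomes set_pmf_Bern_k])
  show "prob_space P"
    using assms by (simp add: space_prob_algebra)
  show "(\<lambda>x. pmf (Bern_k d k x) s) \<in> borel_measurable P" for s
    using assms by (intro borel_measurable_pmf_Bern_k) (simp add: space_prob_algebra)
qed

lemma integral_pmf_Bern_k_pos:
  assumes "P \<in> space (prob_algebra (out_space d))" "AE x in P. x \<in> cube d c" "0 < c"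
    and "s \<in> Bern_k_outcomes d k"
  shows "0 < (\<integral>x. pmf (Bern_k d k x) s \<partial>P)"
proof -
  interpret prob_space P
    using assms(1) by (simp add: space_prob_algebra)
  have "(\<lambda>x. pmf (Bern_k d k x) s) \<in> borel_measurable P"
    using assms(1) by (intro borel_measurable_pmf_Bern_k) (simp add: space_prob_algebra)
  then have "integrable P (\<lambda>x. pmf (Bern_k d k x) s)"
    by (intro integrable_const_bound[where B = 1]) (auto simp: pmf_le_1)
  moreover have "AE x in P. c ^ (d * k) \<le> pmf (Bern_k d k x) s"
    using assms(2) by eventually_elim (use assms(3,4) in \<open>auto intro: pmf_Bern_k_ge\<close>)
  ultimately have "c ^ (d * k) \<le> (\<integral>x. pmf (Bern_k d k x) s \<partial>P)"
    by (rule integral_ge_const)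
  then show ?thesis
    by (rule less_le_trans[OF zero_less_power[OF assms(3)]])
qed

lemma pmf_Bern_k_outside: "s \<notin> Bern_k_outcomes d k \<Longrightarrow> pmf (Bern_k d k x) s = 0"
  using set_pmf_Bern_k by (auto simp: pmf_eq_0_set_pmf)

lemma renyi_Bern_k_dist_le:
  assumes c: "0 < c" "c < 1/2" and \<alpha>: "\<alpha> > 1"
    and P: "P \<in> space (prob_algebra (out_space d))" "AE x in P. x \<in> cube d c"
    and Q: "Q \<in> space (prob_algebra (out_space d))" "AE y in Q. y \<in> cube d c"
  shows "renyi \<alpha> (Bern_k_dist d k P) (Bern_k_dist d k Q)
       \<le> ereal (ln (bernoulli_moment \<alpha> c (1 - c) ^ (d * k)) / (\<alpha> - 1))"
proof -
  let ?S = "Bern_k_outcomes d k"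
  define u where "u s = (\<integral>x. pmf (Bern_k d k x) s \<partial>P)" for s
  define v where "v s = (\<integral>y. pmf (Bern_k d k y) s \<partial>Q)" for s
  have pos: "0 < u s \<and> 0 < v s" if "s \<in> ?S" for s
    unfolding u_def v_def using P Q c that by (auto intro: integral_pmf_Bern_k_pos)
  have "renyi_moment \<alpha> ?S u v \<le> bernoulli_moment \<alpha> c (1 - c) ^ (d * k)"
    unfolding u_def v_def
  proof (rule renyi_moment_mixture_le[where b = "c ^ (d * k)" and B = 1 and X = "cube d c"])
    show "prob_space P" "prob_space Q"
      using P Q by (simp_all add: space_prob_algebra)
    show "(\<lambda>x. pmf (Bern_k d k x) s) \<in> borel_measurable P" "(\<lambda>x. pmf (Bern_k d k x) s) \<in> borel_measurable Q" for s
      using P Q by (simp_all add: borel_measurable_pmf_Bern_k space_prob_algebra)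
  qed (use assms in \<open>auto intro: pmf_Bern_k_ge pmf_le_1 renyi_moment_Bern_k_le finite_Bern_k_outcomes\<close>)
  moreover have "0 < renyi_moment \<alpha> ?S u v"
    using pos by (intro renyi_moment_pos finite_Bern_k_outcomes Bern_k_outcomes_nonempty)
  moreover have "renyi \<alpha> (Bern_k_dist d k P) (Bern_k_dist d k Q) = ereal (ln (renyi_moment \<alpha> ?S u v) / (\<alpha> - 1))"
    unfolding Bern_k_dist_eq_density[OF P(1)] Bern_k_dist_eq_density[OF Q(1)] u_def[symmetric] v_def[symmetric]
    using pos \<alpha> by (intro renyi_count_space_density finite_Bern_k_outcomes) (auto simp: u_def v_def pmf_Bern_k_outside)
  ultimately show ?thesis
    using \<alpha> by (auto intro!: divide_right_mono)
qed

lemma renyi_Bern_k_opposite_corners: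
  assumes c: "0 < c" "c < 1/2" and \<alpha>: "\<alpha> > 1"
  shows "renyi \<alpha> (measure_pmf (Bern_k d k (\<lambda>_. c))) (measure_pmf (Bern_k d k (\<lambda>_. 1 - c)))
       = ereal (ln (bernoulli_moment \<alpha> c (1 - c) ^ (d * k)) / (\<alpha> - 1))"
proof -
  have corners: "(\<lambda>_. c) \<in> cube d c" "(\<lambda>_. 1 - c) \<in> cube d c"
    using c by (auto simp: cube_def)
  have "0 < pmf (Bern_k d k (\<lambda>_. c)) s \<and> 0 < pmf (Bern_k d k (\<lambda>_. 1 - c)) s" if "s \<in> Bern_k_outcomes d k" for s
    using pmf_Bern_k_ge[OF corners(1) _ that] pmf_Bern_k_ge[OF corners(2) _ that] c
    by (auto intro: less_le_trans[OF zero_less_power])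
  then have "renyi \<alpha> (measure_pmf (Bern_k d k (\<lambda>_. c))) (measure_pmf (Bern_k d k (\<lambda>_. 1 - c)))
      = ereal (ln (renyi_moment \<alpha> (Bern_k_outcomes d k) (pmf (Bern_k d k (\<lambda>_. c))) (pmf (Bern_k d k (\<lambda>_. 1 - c)))) / (\<alpha> - 1))"
    unfolding measure_pmf_eq_density using \<alpha>
    by (intro renyi_count_space_density finite_Bern_k_outcomes) (auto simp: pmf_Bern_k_outside)
  also have "renyi_moment \<alpha> (Bern_k_outcomes d k) (pmf (Bern_k d k (\<lambda>_. c))) (pmf (Bern_k d k (\<lambda>_. 1 - c)))
      = bernoulli_moment \<alpha> c (1 - c) ^ (d * k)"
    using corners c by (subst renyi_moment_Bern_k) (auto simp: cube_def power_mult)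
  finally show ?thesis .
qed

theorem theorem5:
  fixes nb :: "'D \<Rightarrow> 'D \<Rightarrow> bool" and d k :: nat and c \<alpha> \<epsilon> :: real
  assumes "symp nb" and "d \<ge> 1" and "k \<ge> 1" and "0 < c" and "c < 1/2"
    and "\<alpha> > 1" and "\<epsilon> \<ge> 0"
  shows "post (algs_box d c) nb d \<alpha> k \<epsilon>
           \<le> renyi \<alpha> (measure_pmf (Bern_k d k (\<lambda>_. c))) (measure_pmf (Bern_k d k (\<lambda>_. 1 - c)))
       \<and> renyi \<alpha> (measure_pmf (Bern_k d k (\<lambda>_. c))) (measure_pmf (Bern_k d k (\<lambda>_. 1 - c)))
           = ereal (real d * real k * r_fun \<alpha> c)"
proof -
  have c: "0 < c" "c < 1/2" and \<alpha>: "\<alpha> > 1"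
    using assms by auto
  note corners = renyi_Bern_k_opposite_corners[OF c \<alpha>, of d k]
  have "post (algs_box d c) nb d \<alpha> k \<epsilon> \<le> ereal (ln (bernoulli_moment \<alpha> c (1 - c) ^ (d * k)) / (\<alpha> - 1))"
    unfolding post_def eps_alg_def Bern_k_alg_def
    by (intro SUP_least) (auto simp: algs_box_def cube_def intro!: renyi_Bern_k_dist_le[OF c \<alpha>])
  moreover have "0 < bernoulli_moment \<alpha> c (1 - c)"
    using one_le_bernoulli_moment[of c \<alpha>] c \<alpha> by simp
  then have "ln (bernoulli_moment \<alpha> c (1 - c) ^ (d * k)) / (\<alpha> - 1) = real d * real k * r_fun \<alpha> c"
    by (simp add: ln_realpow r_fun_def bernoulli_moment_def)
  ultimately show ?thesis
    using corners by simp
qed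

end
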